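(* For all integers $m\ge 2$, $n\ge 2$, the state complexity of the combined operation $L(M)^*\cup L(N)$, where $M$ ranges over complete DFAs with $m$ states and $N$ over complete DFAs with $n$ states (over a common alphabet), is exactly $\frac{3}{4}2^m\cdot n-n+1$. That is, for every such $M,N$ some DFA with at most $\frac{3}{4}2^m\cdot n-n+1$ states accepts $L(M)^*\cup L(N)$, and there exist such $M,N$ for which the minimal complete DFA of $L(M)^*\cup L(N)$ has exactly $\frac{3}{4}2^m\cdot n-n+1$ states.
   Context: DFAs are complete deterministic finite automata $(Q,\Sigma,\delta,s,F)$; $L(M)$ is the accepted language; $L^*$ is the Kleene star. The state complexity of a regular language is the number of states of its minimal complete DFA; the state complexity of an operation is the maximum state complexity of its result over all argument DFAs of the given sizes. *)

theory Defs
  imports Main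
begin

definition dfa :: "'s set \<Rightarrow> 'a set \<Rightarrow> ('s \<Rightarrow> 'a \<Rightarrow> 's) \<Rightarrow> 's \<Rightarrow> 's set \<Rightarrow> bool" where
  "dfa Q \<Sigma> \<delta> s F \<longleftrightarrow> finite Q \<and> finite \<Sigma> \<and> s \<in> Q \<and> F \<subseteq> Q \<and>
     (\<forall>q\<in>Q. \<forall>a\<in>\<Sigma>. \<delta> q a \<in> Q)"

definition delta_hat :: "('s \<Rightarrow> 'a \<Rightarrow> 's) \<Rightarrow> 's \<Rightarrow> 'a list \<Rightarrow> 's" where
  "delta_hat \<delta> q w = foldl \<delta> q w"

definition lang :: "'a set \<Rightarrow> ('s \<Rightarrow> 'a \<Rightarrow> 's) \<Rightarrow> 's \<Rightarrow> 's set \<Rightarrow> 'a list set" where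
  "lang \<Sigma> \<delta> s F = {w. w \<in> lists \<Sigma> \<and> delta_hat \<delta> s w \<in> F}"

definition kstar :: "'a list set \<Rightarrow> 'a list set" where
  "kstar L = {concat ws | ws. set ws \<subseteq> L}"

text \<open>State complexity of L over alphabet Sigma: number of states of a minimal complete DFA
  (state names are taken from nat w.l.o.g.).\<close>
definition sc :: "'a set \<Rightarrow> 'a list set \<Rightarrow> nat" where
  "sc \<Sigma> L = (LEAST k. \<exists>(Q::nat set) \<delta> s F. dfa Q \<Sigma> \<delta> s F \<and> card Q = k \<and> lang \<Sigma> \<delta> s F = L)"

end

theory Submission
  imports Defs "HOL-Library.Countable"
begin

(* For L(M)^*, all that matters about a word w is the set star_states w
   of M-states reached from the start by the last (possibly partial) star factor.  It
   evolves by the subset construction followed by re-inserting the start state whenever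
   a final state is hit.  Together with a flag "w = []" and the state of N this gives a
   configuration automaton (star_union_step).  On nonempty words its configurations lie
   in {False} \<times> A \<times> Q2, where A is the family of admissible sets (nonempty, and
   containing the start once they meet F), of size at most 3 * 2^(m-2) - 1; if
   F \<subseteq> {s}, star sets are even singletons.

   Over a large alphabet (letters encoded as natural numbers) we build
   witness DFAs for which every admissible configuration is reachable and any two are
   told apart by a word of length at most 1.  Reachable, pairwise inequivalent
   configurations bound every DFA for the language from below
   (card_ge_inequivalent_configs). *)

lemma delta_hat_Nil [simp]: "delta_hat \<delta> q [] = q"
  by (simp add: delta_hat_def)

lemma delta_hat_Cons [simp]: "delta_hat \<delta> q (a # w) = delta_hat \<delta> (\<delta> q a) w"
  by (simp add: delta_hat_def)

lemma delta_hat_append [simp]: "delta_hat \<delta> q (u @ v) = delta_hat \<delta> (delta_hat \<delta> q u) v"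
  by (simp add: delta_hat_def)

lemma delta_hat_in:
  assumes "dfa Q \<Sigma> \<delta> s F" and "q \<in> Q" and "w \<in> lists \<Sigma>"
  shows "delta_hat \<delta> q w \<in> Q"
  using assms(2,3)
proof (induction w arbitrary: q)
  case (Cons a w)
  then have "\<delta> q a \<in> Q" using assms(1) by (auto simp: dfa_def)
  with Cons show ?case by simp
qed simp

lemma lang_lists: "lang \<Sigma> \<delta> s F \<subseteq> lists \<Sigma>"
  by (auto simp: lang_def)

lemma kstar_Nil: "[] \<in> kstar L"
  unfolding kstar_def by (rule CollectI, rule exI[of _ "[]"]) simp

lemma kstar_snoc: "u \<in> kstar L \<Longrightarrow> v \<in> L \<Longrightarrow> u @ v \<in> kstar L"
  unfolding kstar_def by clarify (rule exI[of _ "_ @ [v]"], auto)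

lemma kstar_lists: "L \<subseteq> lists \<Sigma> \<Longrightarrow> kstar L \<subseteq> lists \<Sigma>"
  unfolding kstar_def by auto (meson in_listsD subset_iff)

lemma kstar_last_factor:
  assumes "w \<in> kstar L" and "w \<noteq> []"
  shows "\<exists>u v. w = u @ v \<and> u \<in> kstar L \<and> v \<in> L \<and> v \<noteq> []"
proof -
  obtain ws where ws: "w = concat ws" "set ws \<subseteq> L" using assms(1) by (auto simp: kstar_def)
  have "set ws \<subseteq> L \<Longrightarrow> concat ws \<noteq> [] \<Longrightarrow>
        \<exists>u v. concat ws = u @ v \<and> u \<in> kstar L \<and> v \<in> L \<and> v \<noteq> []"
  proof (induction ws rule: rev_induct)
    case (snoc x ws)
    show ?case
    proof (cases "x = []")
      case False
      have "concat ws \<in> kstar L" using snoc.prems by (auto simp: kstar_def)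
      with False snoc.prems show ?thesis by auto
    qed (use snoc in auto)
  qed simp
  with ws assms(2) show ?thesis by blast
qed

lemma kstar_returns_to_start:
  assumes "F \<subseteq> {s}" and "u \<in> kstar (lang \<Sigma> \<delta> s F)"
  shows "delta_hat \<delta> s u = s"
proof -
  obtain ws where ws: "u = concat ws" "set ws \<subseteq> lang \<Sigma> \<delta> s F"
    using assms(2) by (auto simp: kstar_def)
  have "set ws \<subseteq> lang \<Sigma> \<delta> s F \<Longrightarrow> delta_hat \<delta> s (concat ws) = s"
    by (induction ws) (use assms(1) in \<open>auto simp: lang_def\<close>)
  with ws show ?thesis by simp
qed

definition star_states :: "'a set \<Rightarrow> ('s \<Rightarrow> 'a \<Rightarrow> 's) \<Rightarrow> 's \<Rightarrow> 's set \<Rightarrow> 'a list \<Rightarrow> 's set" where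
  "star_states \<Sigma> \<delta> s F w = {delta_hat \<delta> s v | u v. w = u @ v \<and> u \<in> kstar (lang \<Sigma> \<delta> s F)}"

lemma star_states_Nil: "star_states \<Sigma> \<delta> s F [] = {s}"
  unfolding star_states_def using kstar_Nil by auto

lemma star_states_current: "delta_hat \<delta> s w \<in> star_states \<Sigma> \<delta> s F w"
  unfolding star_states_def using kstar_Nil by force

lemma in_kstar_iff_star_states:
  assumes "w \<in> lists \<Sigma>"
  shows "w \<in> kstar (lang \<Sigma> \<delta> s F) \<longleftrightarrow> w = [] \<or> star_states \<Sigma> \<delta> s F w \<inter> F \<noteq> {}"
proof
  assume "w \<in> kstar (lang \<Sigma> \<delta> s F)"
  then show "w = [] \<or> star_states \<Sigma> \<delta> s F w \<inter> F \<noteq> {}"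
    using kstar_last_factor unfolding star_states_def lang_def by blast
next
  assume "w = [] \<or> star_states \<Sigma> \<delta> s F w \<inter> F \<noteq> {}"
  then show "w \<in> kstar (lang \<Sigma> \<delta> s F)"
  proof
    assume "star_states \<Sigma> \<delta> s F w \<inter> F \<noteq> {}"
    then obtain u v where "w = u @ v" "u \<in> kstar (lang \<Sigma> \<delta> s F)" "delta_hat \<delta> s v \<in> F"
      unfolding star_states_def by blast
    with assms kstar_snoc show ?thesis by (fastforce simp: lang_def)
  qed (simp add: kstar_Nil)
qed

lemma snoc_in_kstar_iff:
  assumes "w @ [a] \<in> lists \<Sigma>"
  shows "w @ [a] \<in> kstar (lang \<Sigma> \<delta> s F) \<longleftrightarrow> (\<lambda>p. \<delta> p a) ` star_states \<Sigma> \<delta> s F w \<inter> F \<noteq> {}"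
proof
  assume "w @ [a] \<in> kstar (lang \<Sigma> \<delta> s F)"
  then obtain u v where uv: "w @ [a] = u @ v" "u \<in> kstar (lang \<Sigma> \<delta> s F)"
      "v \<in> lang \<Sigma> \<delta> s F" "v \<noteq> []"
    using kstar_last_factor by blast
  then obtain v' where v': "v = v' @ [a]" "w = u @ v'"
    by (cases v rule: rev_cases) auto
  with uv have "delta_hat \<delta> s v' \<in> star_states \<Sigma> \<delta> s F w"
    unfolding star_states_def by blast
  moreover have "\<delta> (delta_hat \<delta> s v') a \<in> F" using uv v' by (simp add: lang_def)
  ultimately show "(\<lambda>p. \<delta> p a) ` star_states \<Sigma> \<delta> s F w \<inter> F \<noteq> {}" by blast
next
  assume "(\<lambda>p. \<delta> p a) ` star_states \<Sigma> \<delta> s F w \<inter> F \<noteq> {}"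
  then obtain u v where "w = u @ v" "u \<in> kstar (lang \<Sigma> \<delta> s F)" "\<delta> (delta_hat \<delta> s v) a \<in> F"
    unfolding star_states_def by blast
  with assms kstar_snoc[of u _ "v @ [a]"] show "w @ [a] \<in> kstar (lang \<Sigma> \<delta> s F)"
    by (auto simp: lang_def)
qed

definition restart :: "'s \<Rightarrow> 's set \<Rightarrow> 's set \<Rightarrow> 's set" where
  "restart s F Y = (if Y \<inter> F \<noteq> {} then insert s Y else Y)"

(* Extending w by a letter: either the last factor is extended, or w @ [a]
   itself is in L^* and a new factor starts in s. *)
lemma star_states_snoc_raw:
  "star_states \<Sigma> \<delta> s F (w @ [a]) = (\<lambda>p. \<delta> p a) ` star_states \<Sigma> \<delta> s F w \<union>
     (if w @ [a] \<in> kstar (lang \<Sigma> \<delta> s F) then {s} else {})"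
proof (rule set_eqI)
  fix x
  let ?K = "kstar (lang \<Sigma> \<delta> s F)"
  have "x \<in> star_states \<Sigma> \<delta> s F (w @ [a]) \<longleftrightarrow>
      (\<exists>u v. w @ [a] = u @ v \<and> u \<in> ?K \<and> x = delta_hat \<delta> s v)"
    unfolding star_states_def by blast
  also have "\<dots> \<longleftrightarrow> (w @ [a] \<in> ?K \<and> x = s) \<or>
      (\<exists>u v. w = u @ v \<and> u \<in> ?K \<and> x = \<delta> (delta_hat \<delta> s v) a)"
  proof
    assume "\<exists>u v. w @ [a] = u @ v \<and> u \<in> ?K \<and> x = delta_hat \<delta> s v"
    then obtain u v where "w @ [a] = u @ v" "u \<in> ?K" "x = delta_hat \<delta> s v" by blast
    then show "(w @ [a] \<in> ?K \<and> x = s) \<or> (\<exists>u v. w = u @ v \<and> u \<in> ?K \<and> x = \<delta> (delta_hat \<delta> s v) a)"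
      by (cases v rule: rev_cases) auto
  next
    assume "(w @ [a] \<in> ?K \<and> x = s) \<or> (\<exists>u v. w = u @ v \<and> u \<in> ?K \<and> x = \<delta> (delta_hat \<delta> s v) a)"
    then show "\<exists>u v. w @ [a] = u @ v \<and> u \<in> ?K \<and> x = delta_hat \<delta> s v"
    proof
      assume "w @ [a] \<in> ?K \<and> x = s"
      then show ?thesis by (intro exI[of _ "w @ [a]"] exI[of _ "[]"]) simp
    next
      assume "\<exists>u v. w = u @ v \<and> u \<in> ?K \<and> x = \<delta> (delta_hat \<delta> s v) a"
      then obtain u v where "w = u @ v" "u \<in> ?K" "x = \<delta> (delta_hat \<delta> s v) a" by blast
      then show ?thesis by (intro exI[of _ u] exI[of _ "v @ [a]"]) simp
    qed
  qed
  also have "\<dots> \<longleftrightarrow> x \<in> (\<lambda>p. \<delta> p a) ` star_states \<Sigma> \<delta> s F w \<union> (if w @ [a] \<in> ?K then {s} else {})"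
    unfolding star_states_def by auto
  finally show "x \<in> star_states \<Sigma> \<delta> s F (w @ [a]) \<longleftrightarrow>
      x \<in> (\<lambda>p. \<delta> p a) ` star_states \<Sigma> \<delta> s F w \<union> (if w @ [a] \<in> ?K then {s} else {})" .
qed

lemma star_states_snoc:
  assumes "w @ [a] \<in> lists \<Sigma>"
  shows "star_states \<Sigma> \<delta> s F (w @ [a]) = restart s F ((\<lambda>p. \<delta> p a) ` star_states \<Sigma> \<delta> s F w)"
  using star_states_snoc_raw[of \<Sigma> \<delta> s F w a] snoc_in_kstar_iff[OF assms, of \<delta> s F]
  by (simp add: restart_def)

definition admissible :: "'s set \<Rightarrow> 's \<Rightarrow> 's set \<Rightarrow> 's set set" where
  "admissible Q s F = {P. P \<subseteq> Q \<and> P \<noteq> {} \<and> (P \<inter> F \<noteq> {} \<longrightarrow> s \<in> P)}"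

lemma star_states_admissible:
  assumes "dfa Q \<Sigma> \<delta> s F" and "w \<in> lists \<Sigma>"
  shows "star_states \<Sigma> \<delta> s F w \<in> admissible Q s F"
proof -
  have "x \<in> Q" if "x \<in> star_states \<Sigma> \<delta> s F w" for x
  proof -
    from that obtain u v where "w = u @ v" "x = delta_hat \<delta> s v"
      unfolding star_states_def by blast
    moreover have "s \<in> Q" using assms(1) by (simp add: dfa_def)
    ultimately show "x \<in> Q" using delta_hat_in[OF assms(1)] assms(2) by simp
  qed
  moreover have "s \<in> star_states \<Sigma> \<delta> s F w" if "star_states \<Sigma> \<delta> s F w \<inter> F \<noteq> {}"
  proof -
    have "w \<in> kstar (lang \<Sigma> \<delta> s F)" using that in_kstar_iff_star_states[OF assms(2), of \<delta> s F] by blast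
    then show ?thesis unfolding star_states_def by (intro CollectI exI[of _ w] exI[of _ "[]"]) simp
  qed
  ultimately show ?thesis
    using star_states_current[of \<delta> s w \<Sigma> F] unfolding admissible_def by blast
qed

lemma star_states_singleton:
  assumes "F \<subseteq> {s}"
  shows "star_states \<Sigma> \<delta> s F w = {delta_hat \<delta> s w}"
proof
  show "star_states \<Sigma> \<delta> s F w \<subseteq> {delta_hat \<delta> s w}"
  proof
    fix x assume "x \<in> star_states \<Sigma> \<delta> s F w"
    then obtain u v where "w = u @ v" "u \<in> kstar (lang \<Sigma> \<delta> s F)" "x = delta_hat \<delta> s v"
      unfolding star_states_def by blast
    moreover have "delta_hat \<delta> s u = s" by (rule kstar_returns_to_start[OF assms \<open>u \<in> _\<close>])
    ultimately show "x \<in> {delta_hat \<delta> s w}" by simp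
  qed
qed (simp add: star_states_current)

(* The configuration automaton for L(M)^* \<union> L(N): an "empty word" flag,
   the star states of M, and the state of N. *)
fun star_union_step :: "('s \<Rightarrow> 'a \<Rightarrow> 's) \<Rightarrow> 's \<Rightarrow> 's set \<Rightarrow> ('t \<Rightarrow> 'a \<Rightarrow> 't) \<Rightarrow>
    bool \<times> 's set \<times> 't \<Rightarrow> 'a \<Rightarrow> bool \<times> 's set \<times> 't" where
  "star_union_step \<delta>1 s1 F1 \<delta>2 (b, X, q) a = (False, restart s1 F1 ((\<lambda>p. \<delta>1 p a) ` X), \<delta>2 q a)"

fun star_union_acc :: "'s set \<Rightarrow> 't set \<Rightarrow> bool \<times> 's set \<times> 't \<Rightarrow> bool" where
  "star_union_acc F1 F2 (b, X, q) \<longleftrightarrow> b \<or> X \<inter> F1 \<noteq> {} \<or> q \<in> F2"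

lemma star_union_run:
  assumes "w \<in> lists \<Sigma>"
  shows "delta_hat (star_union_step \<delta>1 s1 F1 \<delta>2) (True, {s1}, s2) w =
    (w = [], star_states \<Sigma> \<delta>1 s1 F1 w, delta_hat \<delta>2 s2 w)"
  using assms
proof (induction w rule: rev_induct)
  case Nil
  show ?case by (simp add: star_states_Nil)
next
  case (snoc a w)
  then have "w \<in> lists \<Sigma>" by simp
  then have "delta_hat (star_union_step \<delta>1 s1 F1 \<delta>2) (True, {s1}, s2) (w @ [a]) =
      star_union_step \<delta>1 s1 F1 \<delta>2 (w = [], star_states \<Sigma> \<delta>1 s1 F1 w, delta_hat \<delta>2 s2 w) a"
    using snoc.IH by simp
  also have "\<dots> = (w @ [a] = [], star_states \<Sigma> \<delta>1 s1 F1 (w @ [a]), delta_hat \<delta>2 s2 (w @ [a]))"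
    using star_states_snoc[OF snoc.prems, of \<delta>1 s1 F1] by simp
  finally show ?case .
qed

lemma star_union_lang:
  "kstar (lang \<Sigma> \<delta>1 s1 F1) \<union> lang \<Sigma> \<delta>2 s2 F2 =
   {w \<in> lists \<Sigma>. star_union_acc F1 F2 (delta_hat (star_union_step \<delta>1 s1 F1 \<delta>2) (True, {s1}, s2) w)}"
proof (rule set_eqI)
  fix w
  show "w \<in> kstar (lang \<Sigma> \<delta>1 s1 F1) \<union> lang \<Sigma> \<delta>2 s2 F2 \<longleftrightarrow>
    w \<in> {w \<in> lists \<Sigma>. star_union_acc F1 F2 (delta_hat (star_union_step \<delta>1 s1 F1 \<delta>2) (True, {s1}, s2) w)}"
  proof (cases "w \<in> lists \<Sigma>")
    case True
    have "w \<in> lang \<Sigma> \<delta>2 s2 F2 \<longleftrightarrow> delta_hat \<delta>2 s2 w \<in> F2" using True by (simp add: lang_def)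
    with in_kstar_iff_star_states[OF True, of \<delta>1 s1 F1] True show ?thesis
      by (simp add: star_union_run[OF True])
  next
    case False
    have "w \<notin> kstar (lang \<Sigma> \<delta>1 s1 F1)" "w \<notin> lang \<Sigma> \<delta>2 s2 F2"
      using False kstar_lists[OF lang_lists, of \<Sigma> \<delta>1 s1 F1] lang_lists[of \<Sigma> \<delta>2 s2 F2] by auto
    with False show ?thesis by simp
  qed
qed

(* Upper-bound principle: if the reachable configurations of a (possibly
   infinite) automaton deciding L lie in a finite set S, then L has a DFA with at
   most card S states (number the reachable configurations). *)
lemma dfa_of_reachable_configs:
  fixes st :: "'c \<Rightarrow> 'a \<Rightarrow> 'c"
  assumes fin: "finite \<Sigma>"
    and L: "L = {w \<in> lists \<Sigma>. ac (delta_hat st c0 w)}"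
    and S: "delta_hat st c0 ` lists \<Sigma> \<subseteq> S" "finite S"
  shows "\<exists>(Q::nat set) \<delta> s F. dfa Q \<Sigma> \<delta> s F \<and> card Q \<le> card S \<and> lang \<Sigma> \<delta> s F = L"
proof -
  let ?R = "delta_hat st c0 ` lists \<Sigma>"
  have fin_R: "finite ?R" using S finite_subset by blast
  obtain h where h: "bij_betw h ?R {0..<card ?R}" using ex_bij_betw_finite_nat[OF fin_R] by blast
  then have inj: "inj_on h ?R" by (simp add: bij_betw_def)
  define \<delta> where "\<delta> = (\<lambda>i a. h (st (inv_into ?R h i) a))"
  have step: "\<delta> (h c) a = h (st c a)" if "c \<in> ?R" for c a
    using that inj by (simp add: \<delta>_def)
  have run: "delta_hat \<delta> (h c0) w = h (delta_hat st c0 w)" if "w \<in> lists \<Sigma>" for w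
    using that
  proof (induction w rule: rev_induct)
    case (snoc a w)
    then have "delta_hat st c0 w \<in> ?R" by auto
    with snoc show ?case by (simp add: step)
  qed simp
  have "dfa (h ` ?R) \<Sigma> \<delta> (h c0) (h ` {c \<in> ?R. ac c})"
    unfolding dfa_def
  proof (intro conjI ballI)
    show "h c0 \<in> h ` ?R" using lists.Nil delta_hat_Nil by (metis image_eqI)
    fix q a assume "q \<in> h ` ?R" and a: "a \<in> \<Sigma>"
    then obtain w where w: "w \<in> lists \<Sigma>" "q = h (delta_hat st c0 w)" by blast
    then have "\<delta> q a = h (delta_hat st c0 (w @ [a]))" by (simp add: step)
    moreover have "w @ [a] \<in> lists \<Sigma>" using w a by simp
    ultimately show "\<delta> q a \<in> h ` ?R" by blast
  qed (use fin fin_R in auto)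
  moreover have "card (h ` ?R) \<le> card S"
    using card_image[OF inj] card_mono[OF S(2,1)] by simp
  moreover have "lang \<Sigma> \<delta> (h c0) (h ` {c \<in> ?R. ac c}) = L"
  proof (rule set_eqI)
    fix w
    show "w \<in> lang \<Sigma> \<delta> (h c0) (h ` {c \<in> ?R. ac c}) \<longleftrightarrow> w \<in> L"
    proof (cases "w \<in> lists \<Sigma>")
      case True
      then have "delta_hat st c0 w \<in> ?R" by blast
      with True show ?thesis
        using inj_on_image_mem_iff[OF inj, of "delta_hat st c0 w" "{c \<in> ?R. ac c}"]
        unfolding L lang_def by (simp add: run)
    qed (simp add: L lang_def)
  qed
  ultimately show ?thesis by blast
qed

(* Lower-bound principle: if any two configurations of C that no word tells
   apart are equal, then words reaching C lead to pairwise different states of every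
   DFA for L, so card C is a lower bound. *)
lemma card_ge_inequivalent_configs:
  fixes st :: "'c \<Rightarrow> 'a \<Rightarrow> 'c"
  assumes d: "dfa Q \<Sigma> \<delta> s F"
    and L: "lang \<Sigma> \<delta> s F = {w \<in> lists \<Sigma>. ac (delta_hat st c0 w)}"
    and reach: "C \<subseteq> delta_hat st c0 ` lists \<Sigma>"
    and inequivalent: "\<And>c c'. c \<in> C \<Longrightarrow> c' \<in> C \<Longrightarrow>
        (\<forall>z \<in> lists \<Sigma>. ac (delta_hat st c z) = ac (delta_hat st c' z)) \<Longrightarrow> c = c'"
  shows "card C \<le> card Q"
proof -
  define word where "word = inv_into (lists \<Sigma>) (delta_hat st c0)"
  have word: "word c \<in> lists \<Sigma> \<and> delta_hat st c0 (word c) = c" if "c \<in> C" for c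
    using reach that unfolding word_def by (meson f_inv_into_f inv_into_into subsetD)
  let ?state = "\<lambda>c. delta_hat \<delta> s (word c)"
  have observe: "ac (delta_hat st c z) \<longleftrightarrow> delta_hat \<delta> (?state c) z \<in> F"
    if "c \<in> C" "z \<in> lists \<Sigma>" for c z
  proof -
    have wz: "word c @ z \<in> lists \<Sigma>" and c: "delta_hat st c0 (word c) = c"
      using word[OF that(1)] that(2) by auto
    have "word c @ z \<in> lang \<Sigma> \<delta> s F \<longleftrightarrow> ac (delta_hat st c z)"
      unfolding L using wz c by simp
    then show ?thesis using wz by (simp add: lang_def)
  qed
  have "inj_on ?state C"
  proof (rule inj_onI)
    fix c c' assume c: "c \<in> C" and c': "c' \<in> C" and eq: "?state c = ?state c'"
    have "\<forall>z \<in> lists \<Sigma>. ac (delta_hat st c z) = ac (delta_hat st c' z)"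
      using observe[OF c] observe[OF c'] eq by simp
    then show "c = c'" by (rule inequivalent[OF c c'])
  qed
  moreover have "?state ` C \<subseteq> Q"
  proof -
    have "s \<in> Q" using d by (simp add: dfa_def)
    then show ?thesis using delta_hat_in[OF d] word by blast
  qed
  moreover have "finite Q" using d by (simp add: dfa_def)
  ultimately show ?thesis by (rule card_inj_on_le)
qed

lemma sc_eqI:
  assumes "dfa (Q::nat set) \<Sigma> \<delta> s F" and "card Q \<le> k" and "lang \<Sigma> \<delta> s F = L"
    and lower: "\<And>(Q'::nat set) \<delta>' s' F'. dfa Q' \<Sigma> \<delta>' s' F' \<Longrightarrow> lang \<Sigma> \<delta>' s' F' = L \<Longrightarrow> k \<le> card Q'"
  shows "sc \<Sigma> L = k"
  unfolding sc_def
proof (rule Least_equality)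
  have "card Q = k" using assms lower[OF assms(1,3)] by simp
  with assms(1,3) show "\<exists>(Q::nat set) \<delta> s F. dfa Q \<Sigma> \<delta> s F \<and> card Q = k \<and> lang \<Sigma> \<delta> s F = L"
    by blast
qed (use lower in blast)

(* Counting: the subsets of Q that are not admissible for F = {f} are the
   empty set and the 2^(|Q|-2) sets containing f but not s. *)
lemma card_admissible_single:
  assumes "finite Q" and "s \<in> Q" and "f \<in> Q" and "s \<noteq> f"
  shows "card (admissible Q s {f}) = 3 * 2^(card Q - 2) - 1"
proof -
  define B where "B = insert f ` Pow (Q - {s, f})"
  have Pow_split: "Pow Q = admissible Q s {f} \<union> insert {} B"
  proof (rule set_eqI, rule iffI)
    fix P assume P: "P \<in> Pow Q"
    show "P \<in> admissible Q s {f} \<union> insert {} B"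
    proof (cases "P \<in> admissible Q s {f}")
      case False
      with P have "P = {} \<or> (f \<in> P \<and> s \<notin> P)" by (auto simp: admissible_def)
      moreover have "f \<in> P \<Longrightarrow> s \<notin> P \<Longrightarrow> P = insert f (P - {s, f}) \<and> P - {s, f} \<in> Pow (Q - {s, f})"
        using P by auto
      ultimately show ?thesis unfolding B_def by blast
    qed simp
  next
    fix P assume "P \<in> admissible Q s {f} \<union> insert {} B"
    then show "P \<in> Pow Q" using assms(3) by (auto simp: admissible_def B_def)
  qed
  have disjoint: "admissible Q s {f} \<inter> insert {} B = {}"
    using assms(4) by (auto simp: admissible_def B_def)
  have "inj_on (insert f) (Pow (Q - {s, f}))"
    by (rule inj_onI) (metis Diff_iff PowD insertCI insert_ident subsetD)
  then have card_B: "card B = 2 ^ (card Q - 2)"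
    using assms by (simp add: B_def card_image card_Pow card_Diff_subset)
  have "{} \<notin> B" by (auto simp: B_def)
  moreover have "finite B" "finite (admissible Q s {f})"
    using finite_subset[OF _ finite_Pow_iff[THEN iffD2, OF assms(1)]] Pow_split by blast+
  ultimately have "card (Pow Q) = card (admissible Q s {f}) + (card B + 1)"
    using card_Un_disjoint[OF _ _ disjoint] Pow_split by simp
  then have "2 ^ card Q = card (admissible Q s {f}) + (2 ^ (card Q - 2) + 1)"
    using card_B assms(1) by (simp add: card_Pow)
  moreover have "2 \<le> card Q" using card_mono[OF assms(1), of "{s, f}"] assms(2-4) by simp
  then obtain k where "card Q = k + 2" using le_Suc_ex by (metis add.commute)
  ultimately show ?thesis by (simp add: power_add)
qed

(* The m singleton star sets (case F \<subseteq> {s}) never exceed the bound. *)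
lemma linear_le_three_pow:
  assumes "2 \<le> m"
  shows "m \<le> 3 * 2 ^ (m - 2) - (1::nat)"
proof -
  have "k + 3 \<le> 3 * 2 ^ k" for k :: nat
    by (induction k) auto
  from this[of "m - 2"] assms show ?thesis by simp
qed

lemma admissible_anti_mono: "F' \<subseteq> F \<Longrightarrow> admissible Q s F \<subseteq> admissible Q s F'"
  unfolding admissible_def by blast

lemma card_star_state_sets:
  assumes d: "dfa Q \<Sigma> \<delta> s F" and card: "card Q = m" and m: "2 \<le> m"
  shows "card (if F \<subseteq> {s} then (\<lambda>q. {q}) ` Q else admissible Q s F) \<le> 3 * 2 ^ (m - 2) - 1"
proof (cases "F \<subseteq> {s}")
  case True
  then show ?thesis using card_image_le[of Q "\<lambda>q. {q}"] d card linear_le_three_pow[OF m]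
    by (simp add: dfa_def)
next
  case False
  then obtain f where f: "f \<in> F" "f \<noteq> s" by blast
  have fin: "finite Q" and s: "s \<in> Q" and "f \<in> Q" using d f by (auto simp: dfa_def)
  then have "card (admissible Q s {f}) = 3 * 2 ^ (m - 2) - 1"
    using card_admissible_single[of Q s f] f card by simp
  moreover have "finite (admissible Q s {f})" using fin by (simp add: admissible_def)
  moreover have "admissible Q s F \<subseteq> admissible Q s {f}"
    by (rule admissible_anti_mono) (use f in simp)
  ultimately have "card (admissible Q s F) \<le> 3 * 2 ^ (m - 2) - 1"
    using card_mono by metis
  with False show ?thesis by simp
qed

theorem star_union_upper_bound:
  fixes \<Sigma> :: "'a set" and Q1 :: "'s set" and Q2 :: "'t set"
  assumes m: "2 \<le> m" and d1: "dfa Q1 \<Sigma> \<delta>1 s1 F1" and c1: "card Q1 = m"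
    and d2: "dfa Q2 \<Sigma> \<delta>2 s2 F2" and c2: "card Q2 = n"
  shows "\<exists>(Q::nat set) \<delta> s F. dfa Q \<Sigma> \<delta> s F \<and> card Q \<le> (3 * 2 ^ (m - 2) - 1) * n + 1 \<and>
      lang \<Sigma> \<delta> s F = kstar (lang \<Sigma> \<delta>1 s1 F1) \<union> lang \<Sigma> \<delta>2 s2 F2"
proof -
  define A where "A = (if F1 \<subseteq> {s1} then (\<lambda>q. {q}) ` Q1 else admissible Q1 s1 F1)"
  define S where "S = insert (True, {s1}, s2) ({False} \<times> A \<times> Q2)"
  have fin: "finite \<Sigma>" "finite Q1" "finite Q2" and s2: "s2 \<in> Q2"
    using d1 d2 by (auto simp: dfa_def)
  have reach: "delta_hat (star_union_step \<delta>1 s1 F1 \<delta>2) (True, {s1}, s2) ` lists \<Sigma> \<subseteq> S"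
  proof (rule image_subsetI)
    fix w assume w: "w \<in> lists \<Sigma>"
    have "star_states \<Sigma> \<delta>1 s1 F1 w \<in> A"
    proof (cases "F1 \<subseteq> {s1}")
      case True
      have "s1 \<in> Q1" using d1 by (simp add: dfa_def)
      then have "delta_hat \<delta>1 s1 w \<in> Q1" by (rule delta_hat_in[OF d1 _ w])
      then show ?thesis using True by (auto simp: A_def star_states_singleton)
    qed (simp add: A_def star_states_admissible[OF d1 w])
    moreover have "delta_hat \<delta>2 s2 w \<in> Q2" by (rule delta_hat_in[OF d2 s2 w])
    ultimately show "delta_hat (star_union_step \<delta>1 s1 F1 \<delta>2) (True, {s1}, s2) w \<in> S"
      by (auto simp: star_union_run[OF w] S_def star_states_Nil)
  qed
  have fin_A: "finite A" using fin by (simp add: A_def admissible_def)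
  have "card S \<le> card A * n + 1"
    using fin fin_A c2 card_insert_le_m1 by (simp add: S_def card_insert_if card_cartesian_product)
  also have "\<dots> \<le> (3 * 2 ^ (m - 2) - 1) * n + 1"
    using card_star_state_sets[OF d1 c1 m] by (simp add: A_def)
  finally have "card S \<le> (3 * 2 ^ (m - 2) - 1) * n + 1" .
  moreover have "finite S" using fin fin_A by (simp add: S_def)
  ultimately show ?thesis
    using dfa_of_reachable_configs[OF fin(1) star_union_lang reach] by (meson order_trans)
qed

(* Shift j moves state 0 of M to j (used to
   fill the star set), Probe e tests whether e is a star state, Goal g tests whether
   N is in state g, and Load xs q collapses M onto the set of xs and sends N to q. *)
datatype letter = Shift nat | Probe nat | Goal nat | Load "nat list" nat

instance letter :: countable
  by countable_datatype

definition act1 :: "nat \<Rightarrow> letter \<Rightarrow> nat \<Rightarrow> nat" where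
  "act1 m l x = (case l of
      Shift j \<Rightarrow> if x = 0 then j else x
    | Probe e \<Rightarrow> if x = e then m - 1 else 0
    | Goal g \<Rightarrow> 0
    | Load xs q \<Rightarrow> if x \<in> set xs then x else hd xs)"

definition act2 :: "nat \<Rightarrow> letter \<Rightarrow> nat \<Rightarrow> nat" where
  "act2 n l y = (case l of
      Shift j \<Rightarrow> y
    | Probe e \<Rightarrow> 0
    | Goal g \<Rightarrow> if y = g then n - 1 else 0
    | Load xs q \<Rightarrow> q)"

definition letters :: "nat \<Rightarrow> nat \<Rightarrow> letter set" where
  "letters m n = Shift ` {1..<m} \<union> Probe ` {..<m} \<union> Goal ` {..<n} \<union>
     (\<lambda>(P, q). Load (sorted_list_of_set P) q) ` (admissible {..<m} 0 {m - 1} \<times> {..<n})"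

definition witness_alphabet :: "nat \<Rightarrow> nat \<Rightarrow> nat set" where
  "witness_alphabet m n = to_nat ` letters m n"

definition witness_delta1 :: "nat \<Rightarrow> nat \<Rightarrow> nat \<Rightarrow> nat" where
  "witness_delta1 m x c = act1 m (from_nat c) x"

definition witness_delta2 :: "nat \<Rightarrow> nat \<Rightarrow> nat \<Rightarrow> nat" where
  "witness_delta2 n y c = act2 n (from_nat c) y"

abbreviation witness_step :: "nat \<Rightarrow> nat \<Rightarrow> bool \<times> nat set \<times> nat \<Rightarrow> nat \<Rightarrow> bool \<times> nat set \<times> nat" where
  "witness_step m n \<equiv> star_union_step (witness_delta1 m) 0 {m - 1} (witness_delta2 n)"

lemma admissible_list:
  fixes m :: nat
  assumes "P \<in> admissible {..<m} s F"
  shows "set (sorted_list_of_set P) = P" and "sorted_list_of_set P \<noteq> []"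
proof -
  have "P \<subseteq> {..<m}" using assms by (simp add: admissible_def)
  then have "finite P" by (rule finite_subset) simp
  with assms show "set (sorted_list_of_set P) = P" "sorted_list_of_set P \<noteq> []"
    by (auto simp: admissible_def)
qed

lemma finite_letters: "finite (letters m n)"
  by (simp add: letters_def admissible_def)

lemma witness_dfa1:
  assumes "2 \<le> m"
  shows "dfa {..<m} (witness_alphabet m n) (witness_delta1 m) 0 {m - 1}"
  unfolding dfa_def
proof (intro conjI ballI)
  fix x c assume x: "x \<in> {..<m}" and "c \<in> witness_alphabet m n"
  then obtain l where l: "l \<in> letters m n" "c = to_nat l" by (auto simp: witness_alphabet_def)
  have "act1 m l x < m"
  proof (cases l)
    case (Load xs q)
    then obtain P where P: "P \<in> admissible {..<m} 0 {m - 1}" "xs = sorted_list_of_set P"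
      using l(1) by (auto simp: letters_def)
    then have "hd xs \<in> P" using admissible_list[OF P(1)] hd_in_set by metis
    with P x show ?thesis using admissible_list[OF P(1)] by (auto simp: Load act1_def admissible_def)
  qed (use l x assms in \<open>auto simp: act1_def letters_def\<close>)
  then show "witness_delta1 m x c \<in> {..<m}" using l by (simp add: witness_delta1_def)
qed (use assms finite_letters in \<open>auto simp: witness_alphabet_def\<close>)

lemma witness_dfa2:
  assumes "2 \<le> n"
  shows "dfa {..<n} (witness_alphabet m n) (witness_delta2 n) 0 {n - 1}"
  unfolding dfa_def
proof (intro conjI ballI)
  fix y c assume y: "y \<in> {..<n}" and "c \<in> witness_alphabet m n"
  then obtain l where l: "l \<in> letters m n" "c = to_nat l" by (auto simp: witness_alphabet_def)
  have "act2 n l y < n" using l y assms by (cases l) (auto simp: act2_def letters_def)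
  then show "witness_delta2 n y c \<in> {..<n}" using l by (simp add: witness_delta2_def)
qed (use assms finite_letters in \<open>auto simp: witness_alphabet_def\<close>)

lemma witness_step_letter:
  "witness_step m n (b, X, q) (to_nat l) = (False, restart 0 {m - 1} (act1 m l ` X), act2 n l q)"
  by (simp add: witness_delta1_def witness_delta2_def)

lemma witness_shift:
  assumes "2 \<le> m" and "0 \<in> X" and "m - 1 \<in> insert j X"
  shows "witness_step m n (b, X, 0) (to_nat (Shift j)) = (False, insert j X, 0)"
proof -
  have "act1 m (Shift j) ` X = insert j (X - {0})"
    using assms(2) by (auto simp: act1_def image_iff)
  then show ?thesis
    unfolding witness_step_letter using assms by (auto simp: act2_def restart_def)
qed

lemma witness_fill:
  assumes "2 \<le> m" and "0 \<in> X" and "m - 1 \<in> X"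
  shows "delta_hat (witness_step m n) (False, X, 0) (map (to_nat \<circ> Shift) js) = (False, X \<union> set js, 0)"
  using assms(2,3)
proof (induction js arbitrary: X)
  case (Cons j js)
  have "witness_step m n (False, X, 0) (to_nat (Shift j)) = (False, insert j X, 0)"
    by (rule witness_shift[OF assms(1) Cons.prems(1)]) (use Cons.prems(2) in simp)
  then have "delta_hat (witness_step m n) (False, X, 0) (map (to_nat \<circ> Shift) (j # js)) =
      delta_hat (witness_step m n) (False, insert j X, 0) (map (to_nat \<circ> Shift) js)"
    by (simp only: list.map delta_hat_Cons comp_apply)
  also have "\<dots> = (False, X \<union> set (j # js), 0)"
    using Cons.IH[of "insert j X"] Cons.prems by (simp add: comp_def)
  finally show ?case .
qed simp

lemma witness_load:
  assumes "P \<in> admissible {..<m} 0 {m - 1}"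
  shows "witness_step m n (b, {..<m}, y) (to_nat (Load (sorted_list_of_set P) q)) = (False, P, q)"
proof -
  let ?xs = "sorted_list_of_set P"
  have "hd ?xs \<in> P" using admissible_list[OF assms] hd_in_set by metis
  then have "act1 m (Load ?xs q) ` {..<m} = P"
    using assms admissible_list[OF assms] by (force simp: act1_def admissible_def)
  moreover have "restart 0 {m - 1} P = P"
    using assms by (auto simp: restart_def admissible_def)
  ultimately show ?thesis unfolding witness_step_letter by (simp add: act2_def)
qed

(* A word reaching (False, P, q): create {0, m - 1}, fill up to {..<m}, load. *)
definition witness_word :: "nat \<Rightarrow> nat set \<Rightarrow> nat \<Rightarrow> nat list" where
  "witness_word m P q = map to_nat (Shift (m - 1) # map Shift [1..<m - 1] @ [Load (sorted_list_of_set P) q])"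

lemma witness_word_reaches:
  assumes m: "2 \<le> m" and P: "P \<in> admissible {..<m} 0 {m - 1}"
  shows "delta_hat (witness_step m n) (True, {0}, 0) (witness_word m P q) = (False, P, q)"
proof -
  have "witness_step m n (True, {0}, 0) (to_nat (Shift (m - 1))) = (False, insert (m - 1) {0}, 0)"
    by (rule witness_shift[OF m]) simp_all
  then have "delta_hat (witness_step m n) (True, {0}, 0) (witness_word m P q) =
      witness_step m n (delta_hat (witness_step m n) (False, {0, m - 1}, 0) (map (to_nat \<circ> Shift) [1..<m - 1]))
        (to_nat (Load (sorted_list_of_set P) q))"
    by (simp only: witness_word_def list.map map_append delta_hat_Cons delta_hat_append
        delta_hat_Nil comp_apply map_map insert_commute)
  also have "{0, m - 1} \<union> set [1..<m - 1] = {..<m}" using m by auto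
  then have "delta_hat (witness_step m n) (False, {0, m - 1}, 0) (map (to_nat \<circ> Shift) [1..<m - 1]) =
      (False, {..<m}, 0)"
    using witness_fill[OF m, of "{0, m - 1}" n "[1..<m - 1]"] by simp
  also have "witness_step m n (False, {..<m}, 0) (to_nat (Load (sorted_list_of_set P) q)) = (False, P, q)"
    by (rule witness_load[OF P])
  finally show ?thesis .
qed

lemma witness_word_in_alphabet:
  assumes "2 \<le> m" and "P \<in> admissible {..<m} 0 {m - 1}" and "q < n"
  shows "witness_word m P q \<in> lists (witness_alphabet m n)"
proof -
  have "Shift j \<in> letters m n" if "j \<in> set ((m - 1) # [1..<m - 1])" for j
    using that assms(1) by (auto simp: letters_def)
  moreover have "Load (sorted_list_of_set P) q \<in> letters m n"
    unfolding letters_def using assms(2,3) by (intro UnI2 image_eqI[of _ _ "(P, q)"]) simp_all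
  ultimately have "set (Shift (m - 1) # map Shift [1..<m - 1] @ [Load (sorted_list_of_set P) q]) \<subseteq> letters m n"
    by auto
  then have "to_nat ` set (Shift (m - 1) # map Shift [1..<m - 1] @ [Load (sorted_list_of_set P) q])
      \<subseteq> witness_alphabet m n"
    unfolding witness_alphabet_def by (rule image_mono)
  then show ?thesis unfolding witness_word_def lists_eq_set by (simp only: mem_Collect_eq set_map)
qed

lemma witness_probe:
  assumes "2 \<le> m" and "2 \<le> n"
  shows "star_union_acc {m - 1} {n - 1} (witness_step m n (b, X, q) (to_nat (Probe e))) \<longleftrightarrow> e \<in> X"
  unfolding witness_step_letter using assms
  by (auto simp: act1_def act2_def restart_def split: if_splits)

lemma witness_goal:
  assumes "2 \<le> m" and "2 \<le> n"
  shows "star_union_acc {m - 1} {n - 1} (witness_step m n (b, X, q) (to_nat (Goal g))) \<longleftrightarrow> q = g"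
  unfolding witness_step_letter using assms by (auto simp: act1_def act2_def restart_def)

definition witness_configs :: "nat \<Rightarrow> nat \<Rightarrow> (bool \<times> nat set \<times> nat) set" where
  "witness_configs m n = insert (True, {0}, 0) ({False} \<times> admissible {..<m} 0 {m - 1} \<times> {..<n})"

(* Distinct witness configurations are told apart by a word of length
   at most 1: the empty word, a Probe or a Goal letter. *)
lemma witness_configs_inequivalent:
  assumes m: "2 \<le> m" and n: "2 \<le> n"
    and c: "(b, X, q) \<in> witness_configs m n" and c': "(b', X', q') \<in> witness_configs m n"
    and same: "\<forall>z \<in> lists (witness_alphabet m n).
      star_union_acc {m - 1} {n - 1} (delta_hat (witness_step m n) (b, X, q) z) =
      star_union_acc {m - 1} {n - 1} (delta_hat (witness_step m n) (b', X', q') z)"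
  shows "(b, X, q) = (b', X', q')"
proof -
  have observe: "star_union_acc {m - 1} {n - 1} (witness_step m n (b, X, q) (to_nat l)) =
      star_union_acc {m - 1} {n - 1} (witness_step m n (b', X', q') (to_nat l))"
    if "l \<in> letters m n" for l
  proof -
    have "[to_nat l] \<in> lists (witness_alphabet m n)"
      using that by (simp add: witness_alphabet_def)
    from bspec[OF same this] show ?thesis by (simp only: delta_hat_Cons delta_hat_Nil)
  qed
  have ranges: "X \<subseteq> {..<m}" "X' \<subseteq> {..<m}" "q < n" "q' < n"
    using c c' m n by (auto simp: witness_configs_def admissible_def)
  have "e \<in> X \<longleftrightarrow> e \<in> X'" if "e < m" for e
    using observe[of "Probe e", unfolded witness_probe[OF m n]] that by (simp add: letters_def)
  with ranges have X: "X = X'" by blast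
  have q: "q' = q"
    using observe[of "Goal q", unfolded witness_goal[OF m n]] ranges by (simp add: letters_def)
  have "b = b'"
  proof (rule ccontr)
    assume "b \<noteq> b'"
    then have "X = {0}" "q = 0" using c c' X q by (auto simp: witness_configs_def)
    moreover have "star_union_acc {m - 1} {n - 1} (b, X, q) = star_union_acc {m - 1} {n - 1} (b', X', q')"
      using bspec[OF same lists.Nil] by (simp only: delta_hat_Nil)
    ultimately show False using \<open>b \<noteq> b'\<close> X q m n by auto
  qed
  with X q show ?thesis by simp
qed

lemma card_witness_configs:
  assumes "2 \<le> m"
  shows "card (witness_configs m n) = (3 * 2 ^ (m - 2) - 1) * n + 1"
proof -
  have "card (admissible {..<m} 0 {m - 1}) = 3 * 2 ^ (m - 2) - 1"
    using card_admissible_single[of "{..<m}" 0 "m - 1"] assms by simp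
  moreover have "finite (admissible {..<m} 0 {m - 1})" by (simp add: admissible_def)
  ultimately show ?thesis by (simp add: witness_configs_def card_cartesian_product)
qed

theorem witness_lower_bound:
  assumes m: "2 \<le> m" and n: "2 \<le> n"
    and d: "dfa Q (witness_alphabet m n) \<delta> s F"
    and L: "lang (witness_alphabet m n) \<delta> s F =
      kstar (lang (witness_alphabet m n) (witness_delta1 m) 0 {m - 1}) \<union>
      lang (witness_alphabet m n) (witness_delta2 n) 0 {n - 1}"
  shows "(3 * 2 ^ (m - 2) - 1) * n + 1 \<le> card Q"
proof -
  have reach: "witness_configs m n \<subseteq> delta_hat (witness_step m n) (True, {0}, 0) ` lists (witness_alphabet m n)"
  proof
    fix c assume "c \<in> witness_configs m n"
    then consider "c = (True, {0}, 0)"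
      | P q where "c = (False, P, q)" "P \<in> admissible {..<m} 0 {m - 1}" "q < n"
      unfolding witness_configs_def by blast
    then show "c \<in> delta_hat (witness_step m n) (True, {0}, 0) ` lists (witness_alphabet m n)"
    proof cases
      case 1
      show ?thesis unfolding 1 by (rule image_eqI[of _ _ "[]"]) simp_all
    next
      case (2 P q)
      show ?thesis unfolding 2(1)
        by (rule image_eqI[of _ _ "witness_word m P q"], rule witness_word_reaches[OF m 2(2), symmetric],
            rule witness_word_in_alphabet[OF m 2(2,3)])
    qed
  qed
  have "card (witness_configs m n) \<le> card Q"
  proof (rule card_ge_inequivalent_configs[OF d L[unfolded star_union_lang] reach])
    fix c c' assume "c \<in> witness_configs m n" "c' \<in> witness_configs m n"
      "\<forall>z \<in> lists (witness_alphabet m n).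
        star_union_acc {m - 1} {n - 1} (delta_hat (witness_step m n) c z) =
        star_union_acc {m - 1} {n - 1} (delta_hat (witness_step m n) c' z)"
    then show "c = c'" using witness_configs_inequivalent[OF m n] by (metis prod_cases3)
  qed
  then show ?thesis using card_witness_configs[OF m] by simp
qed

lemma bound_eq:
  assumes "2 \<le> m"
  shows "3 * 2 ^ m * n div 4 - n + 1 = (3 * 2 ^ (m - 2) - 1) * n + (1::nat)"
proof -
  obtain k where k: "m = k + 2" using assms le_Suc_ex by (metis add.commute)
  then have "3 * 2 ^ m * n div 4 = 3 * 2 ^ (m - 2) * n" by (simp add: power_add)
  then show ?thesis by (simp add: diff_mult_distrib)
qed

theorem theorem3:
  fixes m n :: nat
  assumes "m \<ge> 2" and "n \<ge> 2"
  shows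
   "(\<forall>(\<Sigma>::'a set) (Q1::'s set) \<delta>1 s1 F1 (Q2::'t set) \<delta>2 s2 F2.
        dfa Q1 \<Sigma> \<delta>1 s1 F1 \<and> card Q1 = m \<and> dfa Q2 \<Sigma> \<delta>2 s2 F2 \<and> card Q2 = n \<longrightarrow>
        (\<exists>(Q::nat set) \<delta> s F. dfa Q \<Sigma> \<delta> s F \<and> card Q \<le> 3 * 2^m * n div 4 - n + 1 \<and>
            lang \<Sigma> \<delta> s F = kstar (lang \<Sigma> \<delta>1 s1 F1) \<union> lang \<Sigma> \<delta>2 s2 F2))
    \<and> (\<exists>(\<Sigma>::nat set) (Q1::nat set) \<delta>1 s1 F1 (Q2::nat set) \<delta>2 s2 F2.
        dfa Q1 \<Sigma> \<delta>1 s1 F1 \<and> card Q1 = m \<and> dfa Q2 \<Sigma> \<delta>2 s2 F2 \<and> card Q2 = n \<and>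
        sc \<Sigma> (kstar (lang \<Sigma> \<delta>1 s1 F1) \<union> lang \<Sigma> \<delta>2 s2 F2) = 3 * 2^m * n div 4 - n + 1)"
proof
  show "\<forall>(\<Sigma>::'a set) (Q1::'s set) \<delta>1 s1 F1 (Q2::'t set) \<delta>2 s2 F2.
        dfa Q1 \<Sigma> \<delta>1 s1 F1 \<and> card Q1 = m \<and> dfa Q2 \<Sigma> \<delta>2 s2 F2 \<and> card Q2 = n \<longrightarrow>
        (\<exists>(Q::nat set) \<delta> s F. dfa Q \<Sigma> \<delta> s F \<and> card Q \<le> 3 * 2^m * n div 4 - n + 1 \<and>
            lang \<Sigma> \<delta> s F = kstar (lang \<Sigma> \<delta>1 s1 F1) \<union> lang \<Sigma> \<delta>2 s2 F2)"
    unfolding bound_eq[OF assms(1)]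
    by (intro allI impI, elim conjE, rule star_union_upper_bound[OF assms(1)]) assumption+
  let ?\<Sigma> = "witness_alphabet m n"
  have d1: "dfa {..<m} ?\<Sigma> (witness_delta1 m) 0 {m - 1}" by (rule witness_dfa1[OF assms(1)])
  have d2: "dfa {..<n} ?\<Sigma> (witness_delta2 n) 0 {n - 1}" by (rule witness_dfa2[OF assms(2)])
  obtain Q :: "nat set" and \<delta> s F where "dfa Q ?\<Sigma> \<delta> s F" "card Q \<le> (3 * 2 ^ (m - 2) - 1) * n + 1"
      "lang ?\<Sigma> \<delta> s F = kstar (lang ?\<Sigma> (witness_delta1 m) 0 {m - 1}) \<union> lang ?\<Sigma> (witness_delta2 n) 0 {n - 1}"
    using star_union_upper_bound[OF assms(1) d1 card_lessThan d2 card_lessThan] by blast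
  then have "sc ?\<Sigma> (kstar (lang ?\<Sigma> (witness_delta1 m) 0 {m - 1}) \<union> lang ?\<Sigma> (witness_delta2 n) 0 {n - 1}) =
      (3 * 2 ^ (m - 2) - 1) * n + 1"
    by (rule sc_eqI) (rule witness_lower_bound[OF assms])
  then show "\<exists>(\<Sigma>::nat set) (Q1::nat set) \<delta>1 s1 F1 (Q2::nat set) \<delta>2 s2 F2.
        dfa Q1 \<Sigma> \<delta>1 s1 F1 \<and> card Q1 = m \<and> dfa Q2 \<Sigma> \<delta>2 s2 F2 \<and> card Q2 = n \<and>
        sc \<Sigma> (kstar (lang \<Sigma> \<delta>1 s1 F1) \<union> lang \<Sigma> \<delta>2 s2 F2) = 3 * 2^m * n div 4 - n + 1"
    unfolding bound_eq[OF assms(1)] using d1 d2 by fastforce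
qed

end
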